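(* In the category $\mathbf{Pos}$ of posets, any retract (in the arrow category) of a Dwyer map is a Dwyer map.
   Context: Posets are regarded as categories with a morphism $x\to y$ iff $x\le y$. A full subposet $S\subseteq C$ is a sieve if $c\le s$ with $s\in S$ implies $c\in S$, and a cosieve if $s\le c$ with $s\in S$ implies $c\in S$. A map $k\colon S\to C$ of posets is a Dwyer map if $k$ is the inclusion of a sieve and factors as $S\xrightarrow{i}T\xrightarrow{j}C$, where $j$ is the inclusion of a cosieve and $i$ is an inclusion having a right adjoint $r\colon T\to S$ (i.e. $i(s)\le t\iff s\le r(t)$) with $r\circ i=\mathrm{id}_S$. *)

theory Defs
  imports Main
begin

definition is_poset :: "'a set \<Rightarrow> ('a \<Rightarrow> 'a \<Rightarrow> bool) \<Rightarrow> bool" where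
  "is_poset X le \<longleftrightarrow>
     (\<forall>x\<in>X. le x x) \<and>
     (\<forall>x\<in>X. \<forall>y\<in>X. le x y \<and> le y x \<longrightarrow> x = y) \<and>
     (\<forall>x\<in>X. \<forall>y\<in>X. \<forall>z\<in>X. le x y \<and> le y z \<longrightarrow> le x z)"

definition poset_map :: "'a set \<Rightarrow> ('a \<Rightarrow> 'a \<Rightarrow> bool) \<Rightarrow> 'b set \<Rightarrow> ('b \<Rightarrow> 'b \<Rightarrow> bool)
    \<Rightarrow> ('a \<Rightarrow> 'b) \<Rightarrow> bool" where
  "poset_map X leX Y leY f \<longleftrightarrow>
     (\<forall>x\<in>X. f x \<in> Y) \<and> (\<forall>x\<in>X. \<forall>y\<in>X. leX x y \<longrightarrow> leY (f x) (f y))"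

definition sieve :: "'a set \<Rightarrow> ('a \<Rightarrow> 'a \<Rightarrow> bool) \<Rightarrow> 'a set \<Rightarrow> bool" where
  "sieve C le S \<longleftrightarrow> S \<subseteq> C \<and> (\<forall>c\<in>C. \<forall>s\<in>S. le c s \<longrightarrow> c \<in> S)"

definition cosieve :: "'a set \<Rightarrow> ('a \<Rightarrow> 'a \<Rightarrow> bool) \<Rightarrow> 'a set \<Rightarrow> bool" where
  "cosieve C le S \<longleftrightarrow> S \<subseteq> C \<and> (\<forall>c\<in>C. \<forall>s\<in>S. le s c \<longrightarrow> c \<in> S)"

definition full_embedding :: "'a set \<Rightarrow> ('a \<Rightarrow> 'a \<Rightarrow> bool) \<Rightarrow> 'b set \<Rightarrow> ('b \<Rightarrow> 'b \<Rightarrow> bool)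
    \<Rightarrow> ('a \<Rightarrow> 'b) \<Rightarrow> bool" where
  "full_embedding X leX Y leY f \<longleftrightarrow>
     (\<forall>x\<in>X. f x \<in> Y) \<and> (\<forall>x\<in>X. \<forall>y\<in>X. leX x y \<longleftrightarrow> leY (f x) (f y))"

text \<open>Dwyer map k : S \<rightarrow> C.  k is the inclusion of a sieve, and k factors as
  S --i--> T --j--> C with j the inclusion of a cosieve (T is taken to be a cosieve
  of C with the induced order) and i an inclusion with a right adjoint r, r \<circ> i = id.\<close>
definition dwyer_map :: "'a set \<Rightarrow> ('a \<Rightarrow> 'a \<Rightarrow> bool) \<Rightarrow> 'b set \<Rightarrow> ('b \<Rightarrow> 'b \<Rightarrow> bool)
    \<Rightarrow> ('a \<Rightarrow> 'b) \<Rightarrow> bool" where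
  "dwyer_map S leS C leC k \<longleftrightarrow>
     full_embedding S leS C leC k \<and> sieve C leC (k ` S) \<and>
     (\<exists>T r. cosieve C leC T \<and> k ` S \<subseteq> T \<and>
        poset_map T leC S leS r \<and>
        (\<forall>s\<in>S. \<forall>t\<in>T. leC (k s) t \<longleftrightarrow> leS s (r t)) \<and>
        (\<forall>s\<in>S. r (k s) = s))"

definition arrow_retract ::
  "'c set \<Rightarrow> ('c \<Rightarrow> 'c \<Rightarrow> bool) \<Rightarrow> 'd set \<Rightarrow> ('d \<Rightarrow> 'd \<Rightarrow> bool) \<Rightarrow> ('c \<Rightarrow> 'd) \<Rightarrow>
   'a set \<Rightarrow> ('a \<Rightarrow> 'a \<Rightarrow> bool) \<Rightarrow> 'b set \<Rightarrow> ('b \<Rightarrow> 'b \<Rightarrow> bool) \<Rightarrow> ('a \<Rightarrow> 'b) \<Rightarrow> bool" where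
  "arrow_retract S' leS' C' leC' k' S leS C leC k \<longleftrightarrow>
     (\<exists>a b c d.
        poset_map S' leS' S leS a \<and> poset_map S leS S' leS' b \<and>
        poset_map C' leC' C leC c \<and> poset_map C leC C' leC' d \<and>
        (\<forall>x\<in>S'. b (a x) = x) \<and> (\<forall>y\<in>C'. d (c y) = y) \<and>
        (\<forall>x\<in>S'. k (a x) = c (k' x)) \<and> (\<forall>x\<in>S. k' (b x) = d (k x)))"

end

theory Submission
  imports Defs
begin

text \<open>Given the retraction data \<open>a, b\<close> on the domains and \<open>c, d\<close> on the codomains, each
  clause of the definition of a Dwyer map transfers from \<open>k\<close> to \<open>k'\<close>: the embedding and sieve
  conditions are pulled back along \<open>a\<close> and \<open>c\<close> and pushed forward along \<open>b\<close> and \<open>d\<close>, the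
  cosieve \<open>T\<close> is replaced by its preimage under \<open>c\<close>, and the right adjoint \<open>r\<close> by
  \<open>b \<circ> r \<circ> c\<close>.\<close>

definition cosieve_right_adjoint ::
  "'a set \<Rightarrow> ('a \<Rightarrow> 'a \<Rightarrow> bool) \<Rightarrow> 'b set \<Rightarrow> ('b \<Rightarrow> 'b \<Rightarrow> bool) \<Rightarrow> ('a \<Rightarrow> 'b)
    \<Rightarrow> 'b set \<Rightarrow> ('b \<Rightarrow> 'a) \<Rightarrow> bool" where
  "cosieve_right_adjoint S leS C leC k T r \<longleftrightarrow>
     cosieve C leC T \<and> k ` S \<subseteq> T \<and> poset_map T leC S leS r \<and>
     (\<forall>s\<in>S. \<forall>t\<in>T. leC (k s) t \<longleftrightarrow> leS s (r t)) \<and> (\<forall>s\<in>S. r (k s) = s)"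

lemma dwyer_map_iff:
  "dwyer_map S leS C leC k \<longleftrightarrow>
     full_embedding S leS C leC k \<and> sieve C leC (k ` S) \<and>
     (\<exists>T r. cosieve_right_adjoint S leS C leC k T r)"
  unfolding dwyer_map_def cosieve_right_adjoint_def by blast

lemma poset_mapD:
  assumes "poset_map X leX Y leY f"
  shows poset_map_in: "x \<in> X \<Longrightarrow> f x \<in> Y"
    and poset_map_mono: "x \<in> X \<Longrightarrow> y \<in> X \<Longrightarrow> leX x y \<Longrightarrow> leY (f x) (f y)"
  using assms unfolding poset_map_def by auto

lemma cosieve_vimage:
  assumes "cosieve C leC T" and "poset_map C' leC' C leC c"
  shows "cosieve C' leC' {y \<in> C'. c y \<in> T}"
  using assms unfolding cosieve_def poset_map_def by blast

lemma right_adjoint_counit: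
  assumes "\<forall>s\<in>S. \<forall>t\<in>T. leC (k s) t \<longleftrightarrow> leS s (r t)"
    and "is_poset S leS" and "poset_map T leC S leS r" and "t \<in> T"
  shows "leC (k (r t)) t"
  using assms unfolding is_poset_def poset_map_def by blast

locale poset_arrow_retract =
  fixes S :: "'a set" and leS :: "'a \<Rightarrow> 'a \<Rightarrow> bool"
    and C :: "'b set" and leC :: "'b \<Rightarrow> 'b \<Rightarrow> bool"
    and S' :: "'c set" and leS' :: "'c \<Rightarrow> 'c \<Rightarrow> bool"
    and C' :: "'d set" and leC' :: "'d \<Rightarrow> 'd \<Rightarrow> bool"
    and k :: "'a \<Rightarrow> 'b" and k' :: "'c \<Rightarrow> 'd"
    and a :: "'c \<Rightarrow> 'a" and b :: "'a \<Rightarrow> 'c" and c :: "'d \<Rightarrow> 'b" and d :: "'b \<Rightarrow> 'd"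
  assumes k_map: "poset_map S leS C leC k" and k'_map: "poset_map S' leS' C' leC' k'"
    and a_map: "poset_map S' leS' S leS a" and b_map: "poset_map S leS S' leS' b"
    and c_map: "poset_map C' leC' C leC c" and d_map: "poset_map C leC C' leC' d"
    and b_a: "\<And>x. x \<in> S' \<Longrightarrow> b (a x) = x" and d_c: "\<And>y. y \<in> C' \<Longrightarrow> d (c y) = y"
    and k_a: "\<And>x. x \<in> S' \<Longrightarrow> k (a x) = c (k' x)"
    and k_b: "\<And>x. x \<in> S \<Longrightarrow> k' (b x) = d (k x)"
begin

lemma full_embedding_retract:
  assumes "full_embedding S leS C leC k"
  shows "full_embedding S' leS' C' leC' k'"
  unfolding full_embedding_def
proof (intro conjI ballI iffI)
  fix x y assume x: "x \<in> S'" and y: "y \<in> S'"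
  show "leC' (k' x) (k' y)" if "leS' x y"
    using poset_map_mono[OF k'_map x y that] .
  assume "leC' (k' x) (k' y)"
  then have "leC (k (a x)) (k (a y))"
    using poset_map_mono[OF c_map] poset_map_in[OF k'_map] x y by (simp add: k_a)
  then have "leS (a x) (a y)"
    using assms poset_map_in[OF a_map] x y unfolding full_embedding_def by blast
  then have "leS' (b (a x)) (b (a y))"
    using poset_map_mono[OF b_map] poset_map_in[OF a_map] x y by blast
  then show "leS' x y" using x y by (simp add: b_a)
qed (rule poset_map_in[OF k'_map])

lemma sieve_image_retract:
  assumes "sieve C leC (k ` S)"
  shows "sieve C' leC' (k' ` S')"
  unfolding sieve_def
proof (intro conjI ballI impI)
  show "k' ` S' \<subseteq> C'" using poset_map_in[OF k'_map] by blast
next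
  fix y s assume y: "y \<in> C'" and "s \<in> k' ` S'" and le: "leC' y s"
  then obtain x where x: "x \<in> S'" and s: "s = k' x" by blast
  have "leC (c y) (k (a x))"
    using poset_map_mono[OF c_map y poset_map_in[OF k'_map x]] le s x by (simp add: k_a)
  then have "c y \<in> k ` S"
    using assms poset_map_in[OF c_map y] poset_map_in[OF a_map x] unfolding sieve_def by blast
  then obtain t where t: "t \<in> S" and "c y = k t" by blast
  then have "y = k' (b t)" using y d_c k_b by metis
  then show "y \<in> k' ` S'" using poset_map_in[OF b_map t] by blast
qed

lemma cosieve_right_adjoint_retract:
  assumes "is_poset S leS" and "is_poset C' leC'"
    and "cosieve_right_adjoint S leS C leC k T r"
  shows "cosieve_right_adjoint S' leS' C' leC' k' {y \<in> C'. c y \<in> T} (b \<circ> r \<circ> c)"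
proof -
  let ?T' = "{y \<in> C'. c y \<in> T}"
  from assms(3) have T: "cosieve C leC T" and kT: "k ` S \<subseteq> T"
    and r_map: "poset_map T leC S leS r"
    and adj: "\<forall>s\<in>S. \<forall>t\<in>T. leC (k s) t \<longleftrightarrow> leS s (r t)"
    and r_k: "\<forall>s\<in>S. r (k s) = s"
    unfolding cosieve_right_adjoint_def by auto
  have rcS: "r (c t) \<in> S" if "t \<in> ?T'" for t
    using poset_map_in[OF r_map] that by blast
  have "k' ` S' \<subseteq> ?T'"
    using kT poset_map_in[OF k'_map] poset_map_in[OF a_map] by (auto simp: k_a[symmetric])
  moreover have "poset_map ?T' leC' S' leS' (b \<circ> r \<circ> c)"
    using poset_map_in[OF b_map] poset_map_mono[OF b_map] rcS
      poset_map_mono[OF r_map] poset_map_mono[OF c_map]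
    unfolding poset_map_def by auto
  moreover have "leC' (k' s) t \<longleftrightarrow> leS' s ((b \<circ> r \<circ> c) t)" if s: "s \<in> S'" and t: "t \<in> ?T'" for s t
  proof
    assume "leC' (k' s) t"
    then have "leC (k (a s)) (c t)"
      using poset_map_mono[OF c_map] poset_map_in[OF k'_map s] s t by (simp add: k_a)
    then have "leS (a s) (r (c t))" using adj poset_map_in[OF a_map s] t by blast
    then have "leS' (b (a s)) (b (r (c t)))"
      using poset_map_mono[OF b_map] poset_map_in[OF a_map s] rcS[OF t] by blast
    then show "leS' s ((b \<circ> r \<circ> c) t)" using s by (simp add: b_a)
  next
    assume "leS' s ((b \<circ> r \<circ> c) t)"
    then have "leC' (k' s) (k' (b (r (c t))))"
      using poset_map_mono[OF k'_map s] poset_map_in[OF b_map rcS[OF t]] by simp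
    also have "k' (b (r (c t))) = d (k (r (c t)))" using k_b rcS[OF t] .
    finally have le_image: "leC' (k' s) (d (k (r (c t))))" .
    have "leC (k (r (c t))) (c t)"
      using right_adjoint_counit[OF adj assms(1) r_map] t by blast
    then have "leC' (d (k (r (c t)))) (d (c t))"
      using poset_map_mono[OF d_map] poset_map_in[OF k_map rcS[OF t]] poset_map_in[OF c_map] t
      by blast
    then have image_le: "leC' (d (k (r (c t)))) t" using t by (simp add: d_c)
    show "leC' (k' s) t"
      using assms(2) le_image image_le poset_map_in[OF k'_map s] poset_map_in[OF d_map]
        poset_map_in[OF k_map rcS[OF t]] t
      unfolding is_poset_def by blast
  qed
  moreover have "(b \<circ> r \<circ> c) (k' s) = s" if "s \<in> S'" for s
    using that r_k poset_map_in[OF a_map] by (simp add: k_a[symmetric] b_a)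
  ultimately show ?thesis
    using cosieve_vimage[OF T c_map] unfolding cosieve_right_adjoint_def by blast
qed

lemma dwyer_map_retract:
  assumes "is_poset S leS" and "is_poset C' leC'" and "dwyer_map S leS C leC k"
  shows "dwyer_map S' leS' C' leC' k'"
  using assms full_embedding_retract sieve_image_retract cosieve_right_adjoint_retract
  unfolding dwyer_map_iff by blast

end

theorem lemma3p10:
  fixes S :: "'a set" and leS :: "'a \<Rightarrow> 'a \<Rightarrow> bool"
    and C :: "'b set" and leC :: "'b \<Rightarrow> 'b \<Rightarrow> bool"
    and S' :: "'c set" and leS' :: "'c \<Rightarrow> 'c \<Rightarrow> bool"
    and C' :: "'d set" and leC' :: "'d \<Rightarrow> 'd \<Rightarrow> bool"
    and k :: "'a \<Rightarrow> 'b" and k' :: "'c \<Rightarrow> 'd"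
  assumes "is_poset S leS" and "is_poset C leC"
    and "is_poset S' leS'" and "is_poset C' leC'"
    and "poset_map S leS C leC k" and "poset_map S' leS' C' leC' k'"
    and "dwyer_map S leS C leC k"
    and "arrow_retract S' leS' C' leC' k' S leS C leC k"
  shows "dwyer_map S' leS' C' leC' k'"
proof -
  obtain a b c d where "poset_arrow_retract S leS C leC S' leS' C' leC' k k' a b c d"
    using assms(5,6,8) unfolding arrow_retract_def poset_arrow_retract_def by blast
  then show ?thesis
    using poset_arrow_retract.dwyer_map_retract assms(1,4,7) by blast
qed

end
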